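(* Under the assumptions and notation of the context, for every $t\in[0,T]$, $$\lim_{k\to\infty}h_k(t,X_t)=\mathfrak h(t,X_t)\quad\mathbb P\text{-a.s.},$$ and $$\frac{\mathbf 1_{\{X_0\in A_k\}}}{r_k}\frac{h_k(t,X_t)}{h_k(0,X_0)}\xrightarrow[k\to\infty]{}\frac{\mathfrak h(t,X_t)}{\mathfrak h(0,X_0)}\quad\text{in }L^1(\mathbb P).$$
   Context: Standing SBP assumptions: $\mathbb R$ strong Markov path measure on $D([0,T];\mathbb R^n)$ with transitions $P_{s,t}$; $\rho_0\ll\mathbb R_0$, $\rho_T\ll\mathbb R_T$; Schrödinger bridge $\hat{\mathbb P}=\mathfrak f(X_0)\mathfrak g(X_T)\mathbb R$ with $\mathfrak f,\mathfrak g\ge0$ measurable solving $\mathfrak f(x)\int\mathfrak g(y)P_{0,T}(x,dy)=\frac{d\rho_0}{d\mathbb R_0}(x)$ ($\mathbb R_0$-a.e.), $\mathfrak g(y)\mathbb E_{\mathbb R}[\mathfrak f(X_0)|X_T=y]=\frac{d\rho_T}{d\mathbb R_T}(y)$ ($\mathbb R_T$-a.e.). $S_0=\{d\rho_0/d\mathbb R_0=0\}$, $\mathbb P:=\mathbf 1_{S_0^c}(X_0)\frac{d\rho_0}{d\mathbb R_0}(X_0)\mathbb R$, $\mathfrak h(t,x)=\int\mathfrak g(y)P_{t,T}(x,dy)$. Assumption (A3) holds: for each $g\in C_c^\infty$, $\int g(y)P_{t,T}(x,dy)$ is of class $C^{1,2}$ on $[0,T]\times\mathbb R^n$ and solves $(\partial_t+L)h=0$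 on $(0,T)\times\mathbb R^n$, $L$ being the jump-diffusion generator of $\mathbb R$. Construction: simple $g'_k\uparrow\mathfrak g$ with values in $[0,k]$; $g''_k\in C_b$, $g''_k\ge0$, $\mathbb R_T(g'_k\ne g''_k)\le k^{-3}$; compact $D_k$ with $\mathbb R_T(D_k^c)\le k^{-3}$; $g_k\in C_c^\infty$, $0\le g_k\le k$, $\sup_{D_k}|g_k-g''_k|\le k^{-2}$. $h_k(t,x)=\int g_k(y)P_{t,T}(x,dy)$, $A_k=\{h_k(0,\cdot)>0\}$, $r_k=\rho_0(A_k)$. *)

theory Defs
  imports "HOL-Probability.Probability"
begin

text \<open>Cadlag paths on [0,T]; outside [0,T] a path is normalised to 0 so that
  D([0,T];R^n) is represented faithfully as a set of total functions.\<close>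

definition cadlag_on :: "real \<Rightarrow> (real \<Rightarrow> 'a::metric_space) \<Rightarrow> bool" where
  "cadlag_on T \<omega> \<longleftrightarrow>
     (\<forall>t\<in>{0..<T}. (\<omega> \<longlongrightarrow> \<omega> t) (at_right t)) \<and>
     (\<forall>t\<in>{0<..T}. \<exists>l. (\<omega> \<longlongrightarrow> l) (at_left t))"

definition Dpaths :: "real \<Rightarrow> (real \<Rightarrow> real^'n) set" where
  "Dpaths T = {\<omega>. cadlag_on T \<omega> \<and> (\<forall>t. t \<notin> {0..T} \<longrightarrow> \<omega> t = 0)}"

definition path_space :: "real \<Rightarrow> (real \<Rightarrow> real^'n) measure" where
  "path_space T = sigma (Dpaths T)
     {{\<omega>\<in>Dpaths T. \<omega> t \<in> B} | t B. t \<in> {0..T} \<and> B \<in> sets (borel :: (real^'n) measure)}"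

definition nat_filt :: "(real \<Rightarrow> real^'n) measure \<Rightarrow> real \<Rightarrow> (real \<Rightarrow> real^'n) measure" where
  "nat_filt R t = sigma (space R)
     {{\<omega>\<in>space R. \<omega> s \<in> B} | s B. s \<in> {0..t} \<and> B \<in> sets (borel :: (real^'n) measure)}"

text \<open>R is strong Markov with transitions P: each P s t is a Markov (probability) kernel,
  jointly measurable in (s,x), and for every stopping time tau (natural filtration) with
  values in [0,T], every t in [0,T], every A in F_tau and every nonnegative Borel f,
  E_R[1_{A, tau<=t} f(X_t)] = E_R[1_{A, tau<=t} P_{tau,t} f (X_tau)].
  (R may be an unbounded positive measure, hence the nonnegative integrals.)\<close>

definition strong_markov_transitions ::
  "(real \<Rightarrow> real^'n) measure \<Rightarrow> real \<Rightarrow> (real \<Rightarrow> real \<Rightarrow> real^'n \<Rightarrow> (real^'n) measure) \<Rightarrow> bool" where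
  "strong_markov_transitions R T P \<longleftrightarrow>
     (\<forall>s t. 0 \<le> s \<longrightarrow> s \<le> t \<longrightarrow> t \<le> T \<longrightarrow> P s t \<in> borel \<rightarrow>\<^sub>M prob_algebra borel) \<and>
     (\<forall>t\<in>{0..T}. (\<lambda>(s, x). P s t x)
          \<in> restrict_space (borel \<Otimes>\<^sub>M borel) ({0..t} \<times> UNIV) \<rightarrow>\<^sub>M prob_algebra borel) \<and>
     (\<forall>(\<tau> :: (real \<Rightarrow> real^'n) \<Rightarrow> real) t A (f :: real^'n \<Rightarrow> ennreal).
        stopping_time (nat_filt R) \<tau> \<longrightarrow> (\<forall>\<omega>\<in>space R. \<tau> \<omega> \<in> {0..T}) \<longrightarrow>
        t \<in> {0..T} \<longrightarrow> A \<in> sets (filtration.pre_sigma (space R) (nat_filt R) \<tau>) \<longrightarrow>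
        f \<in> borel_measurable borel \<longrightarrow>
        (\<integral>\<^sup>+\<omega>. indicator {\<omega>\<in>A. \<tau> \<omega> \<le> t} \<omega> * f (\<omega> t) \<partial>R) =
        (\<integral>\<^sup>+\<omega>. indicator {\<omega>\<in>A. \<tau> \<omega> \<le> t} \<omega> * (\<integral>\<^sup>+y. f y \<partial>(P (\<tau> \<omega>) t (\<omega> (\<tau> \<omega>)))) \<partial>R))"

text \<open>E_R[F | X_T = y] for nonnegative F: the Radon-Nikodym derivative of the X_T-image of
  F.R with respect to R_T.\<close>

definition cond_exp_given_X :: "(real \<Rightarrow> real^'n) measure \<Rightarrow> ((real \<Rightarrow> real^'n) \<Rightarrow> ennreal)
     \<Rightarrow> real \<Rightarrow> real^'n \<Rightarrow> ennreal" where
  "cond_exp_given_X R F t y =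
     RN_deriv (distr R borel (\<lambda>\<omega>. \<omega> t)) (distr (density R F) borel (\<lambda>\<omega>. \<omega> t)) y"

fun pderivs :: "'n list \<Rightarrow> (real^'n \<Rightarrow> real) \<Rightarrow> (real^'n \<Rightarrow> real)" where
  "pderivs [] f = f"
| "pderivs (i # is) f = (\<lambda>x. deriv (\<lambda>s. pderivs is f (x + s *\<^sub>R axis i 1)) 0)"

definition smooth_fun :: "(real^'n \<Rightarrow> real) \<Rightarrow> bool" where
  "smooth_fun f \<longleftrightarrow>
     (\<forall>is. continuous_on UNIV (pderivs is f) \<and>
        (\<forall>i x. (\<lambda>s. pderivs is f (x + s *\<^sub>R axis i 1)) differentiable (at 0)))"

definition compact_support :: "(real^'n \<Rightarrow> real) \<Rightarrow> bool" where
  "compact_support f \<longleftrightarrow> compact (closure {x. f x \<noteq> 0})"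

definition C12_backward_eq ::
  "real \<Rightarrow> (real \<Rightarrow> real^'n \<Rightarrow> real^'n) \<Rightarrow> (real \<Rightarrow> real^'n \<Rightarrow> real^'n^'n)
   \<Rightarrow> (real \<Rightarrow> real^'n \<Rightarrow> (real^'n) measure) \<Rightarrow> (real \<Rightarrow> real^'n \<Rightarrow> real) \<Rightarrow> bool" where
  "C12_backward_eq T b a J h \<longleftrightarrow>
     (\<exists>ht hx hxx.
        continuous_on ({0..T} \<times> UNIV) (\<lambda>(t, x). h t x) \<and>
        continuous_on ({0..T} \<times> UNIV) (\<lambda>(t, x). ht t x) \<and>
        continuous_on ({0..T} \<times> UNIV) (\<lambda>(t, x). hx t x) \<and>
        continuous_on ({0..T} \<times> UNIV) (\<lambda>(t, x). hxx t x) \<and>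
        (\<forall>t\<in>{0..T}. \<forall>x.
           ((\<lambda>s. h s x) has_real_derivative ht t x) (at t within {0..T}) \<and>
           (h t has_derivative (\<lambda>v. hx t x \<bullet> v)) (at x) \<and>
           (hx t has_derivative (\<lambda>v. hxx t x *v v)) (at x)) \<and>
        (\<forall>t\<in>{0<..<T}. \<forall>x.
           ht t x + b t x \<bullet> hx t x
           + (1/2) * (\<Sum>i\<in>UNIV. \<Sum>j\<in>UNIV. a t x $ i $ j * hxx t x $ i $ j)
           + (\<integral>z. h t (x + z) - h t x - (if norm z \<le> 1 then hx t x \<bullet> z else 0) \<partial>(J t x))
           = 0))"

end

theory Submission
  imports Defs
begin

text \<open>
  Let \<open>E\<^sub>k = {g'\<^sub>k \<noteq> g''\<^sub>k} \<union> D\<^sub>k\<^sup>c\<close>. Off \<open>E\<^sub>k\<close> the smooth \<open>g\<^sub>k\<close> is \<open>1/k\<^sup>2\<close>-close to the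
  simple \<open>g'\<^sub>k\<close>, and both are bounded by \<open>k\<close>. Integrating \<open>k P\<^sub>t\<^sub>,\<^sub>T(x, E\<^sub>k)\<close> against the law
  of \<open>X\<^sub>t\<close> gives \<open>k R\<^sub>T(E\<^sub>k) \<le> 2/k\<^sup>2\<close>, which is summable, so \<open>k P\<^sub>t\<^sub>,\<^sub>T(x, E\<^sub>k) \<rightarrow> 0\<close> for
  \<open>R\<^sub>t\<close>-a.e. \<open>x\<close>. For such \<open>x\<close> the integrals of \<open>g\<^sub>k\<close> and of \<open>g'\<^sub>k\<close> against \<open>P\<^sub>t\<^sub>,\<^sub>T(x,\<cdot>)\<close>
  differ by at most \<open>1/k\<^sup>2 + k P\<^sub>t\<^sub>,\<^sub>T(x, E\<^sub>k)\<close>, and the latter increase to \<open>hh(t,x)\<close>; this is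
  the almost sure convergence, first under \<open>R\<close> and hence under \<open>PP \<ll> R\<close>.

  The initial law of \<open>PP\<close> is \<open>\<rho>\<^sub>0\<close>, so by the Markov property
  \<open>E\<^bsub>PP\<^esub>[\<phi>(X\<^sub>0) P\<^sub>t\<^sub>,\<^sub>T f(X\<^sub>t)] = \<integral> \<phi> P\<^sub>0\<^sub>,\<^sub>T f d\<rho>\<^sub>0\<close>. The Schroedinger system gives
  \<open>0 < hh(0,\<cdot>) < \<infinity>\<close> \<open>\<rho>\<^sub>0\<close>-a.e.; taking \<open>\<phi> = 1/hh(0,\<cdot>)\<close> shows that the limit ratio has
  \<open>PP\<close>-mean \<open>1\<close>, and taking \<open>\<phi> = 1\<^sub>A\<^sub>k / (r\<^sub>k h\<^sub>k(0,\<cdot>))\<close> shows that the approximating ratios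
  have mean at most \<open>1\<close>. Since \<open>r\<^sub>k \<rightarrow> 1\<close> by dominated convergence, the ratios converge
  \<open>PP\<close>-a.s., and Scheffe's lemma upgrades this to convergence in \<open>L\<^sup>1(PP)\<close>.
\<close>

section \<open>Measure-theoretic convergence lemmas\<close>

lemma AE_tendsto_zero_of_nn_integral_suminf_finite:
  fixes f :: "nat \<Rightarrow> 'a \<Rightarrow> real"
  assumes f_meas: "\<And>k. f k \<in> borel_measurable M"
    and f_nonneg: "\<And>k x. 0 \<le> f k x"
    and finite: "(\<Sum>k. \<integral>\<^sup>+x. ennreal (f k x) \<partial>M) < \<infinity>"
  shows "AE x in M. (\<lambda>k. f k x) \<longlonglongrightarrow> 0"
proof -
  have "(\<integral>\<^sup>+x. (\<Sum>k. ennreal (f k x)) \<partial>M) = (\<Sum>k. \<integral>\<^sup>+x. ennreal (f k x) \<partial>M)"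
    by (rule nn_integral_suminf) (use f_meas in auto)
  with finite have "AE x in M. (\<Sum>k. ennreal (f k x)) \<noteq> \<infinity>"
    by (intro nn_integral_PInf_AE) (use f_meas in auto)
  then show ?thesis
  proof (rule AE_mp, intro AE_I2 impI)
    fix x assume "(\<Sum>k. ennreal (f k x)) \<noteq> \<infinity>"
    then have "summable (\<lambda>k. f k x)"
      by (intro summable_suminf_not_top) (use f_nonneg in auto)
    then show "(\<lambda>k. f k x) \<longlonglongrightarrow> 0" by (rule summable_LIMSEQ_zero)
  qed
qed

lemma ennreal_tendsto_of_close:
  fixes a b e :: "nat \<Rightarrow> real"
  assumes a: "(\<lambda>k. ennreal (a k)) \<longlonglongrightarrow> L" and e: "e \<longlonglongrightarrow> 0"
    and close: "\<And>k. \<bar>b k - a k\<bar> \<le> e k"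
  shows "(\<lambda>k. ennreal (b k)) \<longlonglongrightarrow> L"
proof (rule tendsto_sandwich)
  have e_nonneg: "0 \<le> e k" for k using close[of k] by linarith
  show "\<forall>\<^sub>F k in sequentially. ennreal (a k) - ennreal (e k) \<le> ennreal (b k)"
  proof (intro always_eventually allI)
    fix k
    have "a k - e k \<le> b k" using close[of k] by (simp add: abs_le_iff)
    then show "ennreal (a k) - ennreal (e k) \<le> ennreal (b k)"
      using e_nonneg[of k] by (simp add: ennreal_minus ennreal_leI)
  qed
  show "\<forall>\<^sub>F k in sequentially. ennreal (b k) \<le> ennreal (a k) + ennreal (e k)"
  proof (intro always_eventually allI)
    fix k
    have "ennreal (b k) \<le> ennreal (max 0 (a k) + e k)"
      using close[of k] by (intro ennreal_leI) (simp add: abs_le_iff max_def)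
    also have "\<dots> = ennreal (a k) + ennreal (e k)"
      using e_nonneg[of k] by (simp add: ennreal_plus max_def ennreal_neg)
    finally show "ennreal (b k) \<le> ennreal (a k) + ennreal (e k)" .
  qed
  show "(\<lambda>k. ennreal (a k) - ennreal (e k)) \<longlonglongrightarrow> L"
    using tendsto_diff_ennreal_general[OF a tendsto_ennrealI[OF e]] by simp
  show "(\<lambda>k. ennreal (a k) + ennreal (e k)) \<longlonglongrightarrow> L"
    using tendsto_add[OF a tendsto_ennrealI[OF e]] by simp
qed

lemma (in prob_space) abs_integral_diff_le_off_set:
  fixes f1 f2 :: "'a \<Rightarrow> real"
  assumes meas: "f1 \<in> borel_measurable M" "f2 \<in> borel_measurable M" and E: "E \<in> events"
    and bounded: "\<And>y. f1 y \<in> {0..B}" "\<And>y. f2 y \<in> {0..B}"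
    and close: "\<And>y. y \<notin> E \<Longrightarrow> \<bar>f1 y - f2 y\<bar> \<le> \<delta>" and "0 \<le> \<delta>"
  shows "\<bar>expectation f1 - expectation f2\<bar> \<le> \<delta> + B * prob E"
proof -
  have int: "integrable M f1" "integrable M f2"
    using meas bounded by (auto intro!: integrable_const_bound[where B=B])
  have int_bound: "integrable M (\<lambda>y. \<delta> + B * indicator E y)"
    using E by (intro Bochner_Integration.integrable_add integrable_mult_right integrable_real_indicator)
      (auto simp: emeasure_eq_measure)
  have pointwise: "\<bar>f1 y - f2 y\<bar> \<le> \<delta> + B * indicator E y" for y
    using close[of y] bounded[of y] \<open>0 \<le> \<delta>\<close> by (cases "y \<in> E") auto
  have "\<bar>expectation f1 - expectation f2\<bar> = \<bar>\<integral>y. f1 y - f2 y \<partial>M\<bar>"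
    using int by simp
  also have "\<dots> \<le> (\<integral>y. \<bar>f1 y - f2 y\<bar> \<partial>M)" by (rule integral_abs_bound)
  also have "\<dots> \<le> (\<integral>y. \<delta> + B * indicator E y \<partial>M)"
    using int int_bound pointwise by (intro integral_mono) auto
  also have "\<dots> = \<delta> + B * prob E"
    using E int_bound by (simp add: prob_space emeasure_eq_measure)
  finally show ?thesis .
qed

lemma (in prob_space) tendsto_expectation_of_approximation:
  fixes g' g :: "nat \<Rightarrow> 'a \<Rightarrow> real"
  assumes meas: "\<And>k. g' k \<in> borel_measurable M" "\<And>k. g k \<in> borel_measurable M"
    and bounded: "\<And>k y. g' k y \<in> {0..B k}" "\<And>k y. g k y \<in> {0..B k}"
    and mono: "\<And>k y. g' k y \<le> g' (Suc k) y"
    and lim: "\<And>y. (\<lambda>k. g' k y) \<longlonglongrightarrow> G y"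
    and E: "\<And>k. E k \<in> events"
    and close: "\<And>k y. y \<notin> E k \<Longrightarrow> \<bar>g k y - g' k y\<bar> \<le> \<delta> k"
    and \<delta>: "\<And>k. 0 \<le> \<delta> k" "\<delta> \<longlonglongrightarrow> 0"
    and small: "(\<lambda>k. B k * prob (E k)) \<longlonglongrightarrow> 0"
  shows "(\<lambda>k. ennreal (expectation (g k))) \<longlonglongrightarrow> (\<integral>\<^sup>+y. ennreal (G y) \<partial>M)"
proof (rule ennreal_tendsto_of_close)
  have "(\<lambda>k. \<integral>\<^sup>+y. ennreal (g' k y) \<partial>M) \<longlonglongrightarrow> (\<integral>\<^sup>+y. ennreal (G y) \<partial>M)"
  proof (rule nn_integral_LIMSEQ)
    show "incseq (\<lambda>k y. ennreal (g' k y))"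
      using mono by (intro incseq_SucI) (auto simp: le_fun_def intro!: ennreal_leI)
    show "(\<lambda>k. ennreal (g' k y)) \<longlonglongrightarrow> ennreal (G y)" for y
      using lim by (rule tendsto_ennrealI)
  qed (use meas in auto)
  moreover have "(\<integral>\<^sup>+y. ennreal (g' k y) \<partial>M) = ennreal (expectation (g' k))" for k
    using meas bounded by (intro nn_integral_eq_integral integrable_const_bound[where B="B k"]) auto
  ultimately show "(\<lambda>k. ennreal (expectation (g' k))) \<longlonglongrightarrow> (\<integral>\<^sup>+y. ennreal (G y) \<partial>M)"
    by simp
  show "(\<lambda>k. \<delta> k + B k * prob (E k)) \<longlonglongrightarrow> 0"
    using tendsto_add_zero[OF \<delta>(2) small] .
  show "\<bar>expectation (g k) - expectation (g' k)\<bar> \<le> \<delta> k + B k * prob (E k)" for k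
    by (rule abs_integral_diff_le_off_set) (use meas bounded E close \<delta> in auto)
qed

lemma integrable_of_nn_integral_norm_le:
  fixes F f :: "'a \<Rightarrow> 'b::{banach, second_countable_topology}"
  assumes "F \<in> borel_measurable M" "integrable M f"
    and "(\<integral>\<^sup>+x. norm (F x) \<partial>M) \<le> (\<integral>\<^sup>+x. norm (f x) \<partial>M)"
  shows "integrable M F"
  using assms unfolding integrable_iff_bounded by (auto intro: le_less_trans)

lemma Scheffe_integral_norm_diff_tendsto_zero:
  fixes F :: "nat \<Rightarrow> 'a \<Rightarrow> 'b::{banach, second_countable_topology}" and f :: "'a \<Rightarrow> 'b"
  assumes meas: "\<And>k. F k \<in> borel_measurable M" and f: "integrable M f"
    and lim: "AE x in M. (\<lambda>k. F k x) \<longlonglongrightarrow> f x"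
    and bound: "\<And>k. (\<integral>\<^sup>+x. norm (F k x) \<partial>M) \<le> (\<integral>\<^sup>+x. norm (f x) \<partial>M)"
  shows "(\<lambda>k. \<integral>x. norm (F k x - f x) \<partial>M) \<longlonglongrightarrow> 0"
proof -
  have int: "integrable M (\<lambda>x. norm (F k x - f x))" for k
    using integrable_of_nn_integral_norm_le[OF meas f bound] f by auto
  have "(\<lambda>k. \<integral>\<^sup>+x. norm (F k x - f x) \<partial>M) \<longlonglongrightarrow> 0"
    by (rule Scheffe_lemma2[OF meas f lim bound])
  then have "(\<lambda>k. enn2real (\<integral>\<^sup>+x. norm (F k x - f x) \<partial>M)) \<longlonglongrightarrow> enn2real 0"
    by (intro tendsto_enn2real) auto
  then show ?thesis
    using int by (simp add: nn_integral_eq_integral)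
qed

lemma tendsto_enn2real_of_ennreal:
  fixes a :: "nat \<Rightarrow> real"
  assumes lim: "(\<lambda>k. ennreal (a k)) \<longlonglongrightarrow> x" and "x < \<infinity>"
    and nonneg: "\<forall>\<^sub>F k in sequentially. 0 \<le> a k"
  shows "a \<longlonglongrightarrow> enn2real x"
proof -
  have "(\<lambda>k. enn2real (ennreal (a k))) \<longlonglongrightarrow> enn2real x"
    using lim \<open>x < \<infinity>\<close> by (intro tendsto_enn2real) auto
  moreover have "\<forall>\<^sub>F k in sequentially. enn2real (ennreal (a k)) = a k"
    using nonneg by eventually_elim simp
  ultimately show ?thesis by (rule Lim_transform_eventually)
qed

lemma ennreal_inverse_mult_cancel:
  assumes "0 < x" "x < \<infinity>"
  shows "ennreal (1 / enn2real x) * x = 1"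
  using assms by (cases x) (auto simp flip: ennreal_mult)

lemma borel_measurable_smooth_fun: "smooth_fun f \<Longrightarrow> f \<in> borel_measurable borel"
  unfolding smooth_fun_def using borel_measurable_continuous_onI[of f] by (metis pderivs.simps(1))

section \<open>Markov path measures\<close>

lemma space_path_space: "space (path_space T) = Dpaths T"
  unfolding path_space_def by (rule space_measure_of) auto

lemma sets_path_space: "sets (path_space T) = sigma_sets (Dpaths T)
     {{\<omega>\<in>Dpaths T. \<omega> t \<in> B} | t B. t \<in> {0..T} \<and> B \<in> sets (borel :: (real^'n) measure)}"
  unfolding path_space_def by (rule sets_measure_of) auto

lemma sets_nat_filt: "sets (nat_filt R u) = sigma_sets (space R)
     {{\<omega>\<in>space R. \<omega> s \<in> B} | s B. s \<in> {0..u} \<and> B \<in> sets (borel :: (real^'n) measure)}"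
  unfolding nat_filt_def by (rule sets_measure_of) auto

lemma filtration_nat_filt: "filtration (space R) (nat_filt R)"
proof
  show "space (nat_filt R i) = space R" for i
    unfolding nat_filt_def by (rule space_measure_of) auto
  show "sets (nat_filt R i) \<subseteq> sets (nat_filt R j)" if "i \<le> j" for i j :: real
    unfolding sets_nat_filt using that by (intro sigma_sets_mono') force
qed

locale markov_path_measure =
  fixes T :: real and R :: "(real \<Rightarrow> real^'n) measure"
    and P :: "real \<Rightarrow> real \<Rightarrow> real^'n \<Rightarrow> (real^'n) measure"
  assumes sets_R: "sets R = sets (path_space T)"
    and strong_markov: "strong_markov_transitions R T P"
begin

lemma measurable_coordinate:
  assumes "t \<in> {0..T}"
  shows "(\<lambda>\<omega>. \<omega> t) \<in> R \<rightarrow>\<^sub>M borel"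
proof (rule measurableI)
  fix B :: "(real^'n) set" assume "B \<in> sets borel"
  have "space R = Dpaths T"
    using sets_eq_imp_space_eq[OF sets_R] by (simp add: space_path_space)
  then have "(\<lambda>\<omega>. \<omega> t) -` B \<inter> space R = {\<omega>\<in>Dpaths T. \<omega> t \<in> B}" by auto
  also have "\<dots> \<in> sets R"
    unfolding sets_R sets_path_space using \<open>B \<in> sets borel\<close> assms by (intro sigma_sets.Basic) blast
  finally show "(\<lambda>\<omega>. \<omega> t) -` B \<inter> space R \<in> sets R" .
qed auto

lemma transition_kernel:
  assumes "0 \<le> s" "s \<le> t" "t \<le> T"
  shows "P s t \<in> borel \<rightarrow>\<^sub>M prob_algebra borel"
  using strong_markov assms unfolding strong_markov_transitions_def by blast

lemma prob_space_transition:
  assumes "0 \<le> s" "s \<le> t" "t \<le> T"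
  shows "prob_space (P s t x)" and "sets (P s t x) = sets borel"
  using measurable_space[OF transition_kernel[OF assms], of x] by (auto simp: space_prob_algebra)

lemma measurable_transition_nn_integral:
  assumes "0 \<le> s" "s \<le> t" "t \<le> T" and "f \<in> borel_measurable borel"
  shows "(\<lambda>x. \<integral>\<^sup>+y. f y \<partial>P s t x) \<in> borel_measurable borel"
  using measurable_compose[OF measurable_prob_algebraD[OF transition_kernel[OF assms(1-3)]]
      nn_integral_measurable_subprob_algebra[OF assms(4)]] by (simp add: comp_def)

lemma measurable_transition_integral:
  fixes f :: "real^'n \<Rightarrow> real"
  assumes "0 \<le> s" "s \<le> t" "t \<le> T" and "f \<in> borel_measurable borel"
  shows "(\<lambda>x. \<integral>y. f y \<partial>P s t x) \<in> borel_measurable borel"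
  using measurable_compose[OF measurable_prob_algebraD[OF transition_kernel[OF assms(1-3)]]
      integral_measurable_subprob_algebra[OF assms(4)]] by (simp add: comp_def)

lemma measurable_transition_emeasure:
  assumes "0 \<le> s" "s \<le> t" "t \<le> T" and "E \<in> sets borel"
  shows "(\<lambda>x. emeasure (P s t x) E) \<in> borel_measurable borel"
  using measurable_compose[OF measurable_prob_algebraD[OF transition_kernel[OF assms(1-3)]]
      measurable_emeasure_subprob_algebra[OF assms(4)]] by (simp add: comp_def)

text \<open>The strong Markov property for the constant stopping time \<open>t\<close>.\<close>

lemma markov_property_indicator:
  assumes st: "0 \<le> s" "s \<le> t" "t \<le> T" and B: "B \<in> sets borel"
    and f: "f \<in> borel_measurable borel"
  shows "(\<integral>\<^sup>+\<omega>. indicator {\<omega>\<in>space R. \<omega> s \<in> B} \<omega> * f (\<omega> T) \<partial>R) =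
         (\<integral>\<^sup>+\<omega>. indicator {\<omega>\<in>space R. \<omega> s \<in> B} \<omega> * (\<integral>\<^sup>+y. f y \<partial>P t T (\<omega> t)) \<partial>R)"
proof -
  let ?A = "{\<omega>\<in>space R. \<omega> s \<in> B}"
  have "?A \<in> sets (filtration.pre_sigma (space R) (nat_filt R) (\<lambda>_. t))"
  proof (rule filtration.sets_pre_sigmaI[OF filtration_nat_filt stopping_time_const])
    show "{\<omega> \<in> ?A. t \<le> u} \<in> sets (nat_filt R u)" for u
    proof (cases "t \<le> u")
      case True
      then have "?A \<in> sets (nat_filt R u)"
        unfolding sets_nat_filt using st B by (intro sigma_sets.Basic) force
      with True show ?thesis by simp
    qed simp
  qed
  with st f show ?thesis
    using strong_markov[unfolded strong_markov_transitions_def]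
    by (auto dest!: spec[of _ "\<lambda>_. t"] spec[of _ T] intro: stopping_time_const)
qed

lemma markov_property:
  assumes st: "0 \<le> s" "s \<le> t" "t \<le> T"
    and f: "f \<in> borel_measurable borel" and \<phi>: "\<phi> \<in> borel_measurable borel"
  shows "(\<integral>\<^sup>+\<omega>. \<phi> (\<omega> s) * f (\<omega> T) \<partial>R) =
         (\<integral>\<^sup>+\<omega>. \<phi> (\<omega> s) * (\<integral>\<^sup>+y. f y \<partial>P t T (\<omega> t)) \<partial>R)"
proof -
  have times: "s \<in> {0..T}" "t \<in> {0..T}" "T \<in> {0..T}" using st by auto
  note [measurable] = measurable_coordinate[OF times(1)] measurable_coordinate[OF times(2)]
    measurable_coordinate[OF times(3)] f \<phi>
  define F where "F x = (\<integral>\<^sup>+y. f y \<partial>P t T x)" for x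
  have [measurable]: "F \<in> borel_measurable borel"
    unfolding F_def using st by (intro measurable_transition_nn_integral f) auto
  have same_law: "distr (density R (\<lambda>\<omega>. f (\<omega> T))) borel (\<lambda>\<omega>. \<omega> s) =
                  distr (density R (\<lambda>\<omega>. F (\<omega> t))) borel (\<lambda>\<omega>. \<omega> s)"
  proof (rule measure_eqI)
    fix B :: "(real^'n) set" assume "B \<in> sets (distr (density R (\<lambda>\<omega>. f (\<omega> T))) borel (\<lambda>\<omega>. \<omega> s))"
    then have [measurable]: "B \<in> sets borel" by simp
    have [simp]: "{\<omega> \<in> space R. \<omega> s \<in> B} \<in> sets R" by measurable
    have "emeasure (distr (density R (\<lambda>\<omega>. f (\<omega> T))) borel (\<lambda>\<omega>. \<omega> s)) B
          = (\<integral>\<^sup>+\<omega>. indicator {\<omega>\<in>space R. \<omega> s \<in> B} \<omega> * f (\<omega> T) \<partial>R)"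
      by (subst emeasure_distr) (auto simp: emeasure_density mult.commute indicator_def intro!: nn_integral_cong)
    also have "\<dots> = (\<integral>\<^sup>+\<omega>. indicator {\<omega>\<in>space R. \<omega> s \<in> B} \<omega> * F (\<omega> t) \<partial>R)"
      unfolding F_def by (rule markov_property_indicator[OF st _ f]) simp
    also have "\<dots> = emeasure (distr (density R (\<lambda>\<omega>. F (\<omega> t))) borel (\<lambda>\<omega>. \<omega> s)) B"
      by (subst emeasure_distr) (auto simp: emeasure_density mult.commute indicator_def intro!: nn_integral_cong)
    finally show "emeasure (distr (density R (\<lambda>\<omega>. f (\<omega> T))) borel (\<lambda>\<omega>. \<omega> s)) B =
        emeasure (distr (density R (\<lambda>\<omega>. F (\<omega> t))) borel (\<lambda>\<omega>. \<omega> s)) B" .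
  qed simp
  have "(\<integral>\<^sup>+\<omega>. \<phi> (\<omega> s) * f (\<omega> T) \<partial>R) = (\<integral>\<^sup>+x. \<phi> x \<partial>distr (density R (\<lambda>\<omega>. f (\<omega> T))) borel (\<lambda>\<omega>. \<omega> s))"
    by (simp add: nn_integral_distr nn_integral_density mult.commute)
  also have "\<dots> = (\<integral>\<^sup>+\<omega>. \<phi> (\<omega> s) * F (\<omega> t) \<partial>R)"
    by (simp add: same_law nn_integral_distr nn_integral_density mult.commute)
  finally show ?thesis unfolding F_def .
qed

lemma markov_property_initial:
  assumes "0 \<le> t" "t \<le> T"
    and f: "f \<in> borel_measurable borel" and \<phi>: "\<phi> \<in> borel_measurable borel"
  shows "(\<integral>\<^sup>+\<omega>. \<phi> (\<omega> 0) * (\<integral>\<^sup>+y. f y \<partial>P t T (\<omega> t)) \<partial>R) =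
         (\<integral>\<^sup>+\<omega>. \<phi> (\<omega> 0) * (\<integral>\<^sup>+y. f y \<partial>P 0 T (\<omega> 0)) \<partial>R)"
  using markov_property[OF _ _ _ f \<phi>, of 0 t] markov_property[OF _ _ _ f \<phi>, of 0 0] assms by simp

lemma nn_integral_transition_emeasure:
  assumes t: "0 \<le> t" "t \<le> T" and E: "E \<in> sets borel"
  shows "(\<integral>\<^sup>+x. emeasure (P t T x) E \<partial>distr R borel (\<lambda>\<omega>. \<omega> t)) =
         emeasure (distr R borel (\<lambda>\<omega>. \<omega> T)) E"
proof -
  have times: "t \<in> {0..T}" "T \<in> {0..T}" using t by auto
  note [measurable] = measurable_coordinate[OF times(1)] measurable_coordinate[OF times(2)] E
  have sets_P: "sets (P t T x) = sets borel" for x using prob_space_transition(2) t by simp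
  have "emeasure (distr R borel (\<lambda>\<omega>. \<omega> T)) E = (\<integral>\<^sup>+y. indicator E y \<partial>distr R borel (\<lambda>\<omega>. \<omega> T))"
    by simp
  also have "\<dots> = (\<integral>\<^sup>+\<omega>. 1 * indicator E (\<omega> T) \<partial>R)"
    by (subst nn_integral_distr) auto
  also have "\<dots> = (\<integral>\<^sup>+\<omega>. 1 * (\<integral>\<^sup>+y. indicator E y \<partial>P t T (\<omega> t)) \<partial>R)"
    using t by (intro markov_property) auto
  also have "\<dots> = (\<integral>\<^sup>+\<omega>. emeasure (P t T (\<omega> t)) E \<partial>R)"
    by (simp add: sets_P)
  also have "\<dots> = (\<integral>\<^sup>+x. emeasure (P t T x) E \<partial>distr R borel (\<lambda>\<omega>. \<omega> t))"
    using measurable_transition_emeasure[OF t order.refl E] by (simp add: nn_integral_distr)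
  finally show ?thesis ..
qed

lemma AE_tendsto_zero_transition_mass:
  assumes t: "0 \<le> t" "t \<le> T" and E: "\<And>k. E k \<in> sets borel" and B: "\<And>k. 0 \<le> B k"
    and summable: "(\<Sum>k. ennreal (B k) * emeasure (distr R borel (\<lambda>\<omega>. \<omega> T)) (E k)) < \<infinity>"
  shows "AE x in distr R borel (\<lambda>\<omega>. \<omega> t). (\<lambda>k. B k * measure (P t T x) (E k)) \<longlonglongrightarrow> 0"
proof (rule AE_tendsto_zero_of_nn_integral_suminf_finite)
  have emeasure_meas: "(\<lambda>x. emeasure (P t T x) (E k)) \<in> borel_measurable borel" for k
    using measurable_transition_emeasure[OF t order.refl E] .
  show "(\<lambda>x. B k * measure (P t T x) (E k)) \<in> borel_measurable (distr R borel (\<lambda>\<omega>. \<omega> t))" for k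
    using emeasure_meas[of k] unfolding measure_def by simp
  show "0 \<le> B k * measure (P t T x) (E k)" for k x using B by simp
  have "ennreal (B k * measure (P t T x) (E k)) = ennreal (B k) * emeasure (P t T x) (E k)" for k x
    using prob_space_transition(1)[OF t order.refl, THEN prob_space.finite_measure] B
    by (simp add: finite_measure.emeasure_eq_measure ennreal_mult)
  then have "(\<integral>\<^sup>+x. ennreal (B k * measure (P t T x) (E k)) \<partial>distr R borel (\<lambda>\<omega>. \<omega> t)) =
        ennreal (B k) * emeasure (distr R borel (\<lambda>\<omega>. \<omega> T)) (E k)" for k
    using emeasure_meas[of k] by (simp add: nn_integral_cmult nn_integral_transition_emeasure[OF t E])
  then show "(\<Sum>k. \<integral>\<^sup>+x. ennreal (B k * measure (P t T x) (E k)) \<partial>distr R borel (\<lambda>\<omega>. \<omega> t)) < \<infinity>"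
    using summable by simp
qed

lemma AE_tendsto_transition_integral:
  fixes g' g :: "nat \<Rightarrow> real^'n \<Rightarrow> real" and G :: "real^'n \<Rightarrow> real"
  assumes t: "0 \<le> t" "t \<le> T"
    and meas: "\<And>k. g' k \<in> borel_measurable borel" "\<And>k. g k \<in> borel_measurable borel"
    and bounded: "\<And>k y. g' k y \<in> {0..B k}" "\<And>k y. g k y \<in> {0..B k}"
    and mono: "\<And>k y. g' k y \<le> g' (Suc k) y"
    and lim: "\<And>y. (\<lambda>k. g' k y) \<longlonglongrightarrow> G y"
    and E: "\<And>k. E k \<in> sets borel"
    and close: "\<And>k y. y \<notin> E k \<Longrightarrow> \<bar>g k y - g' k y\<bar> \<le> \<delta> k"
    and \<delta>: "\<And>k. 0 \<le> \<delta> k" "\<delta> \<longlonglongrightarrow> 0"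
    and summable: "(\<Sum>k. ennreal (B k) * emeasure (distr R borel (\<lambda>\<omega>. \<omega> T)) (E k)) < \<infinity>"
  shows "AE x in distr R borel (\<lambda>\<omega>. \<omega> t).
           (\<lambda>k. ennreal (\<integral>y. g k y \<partial>P t T x)) \<longlonglongrightarrow> (\<integral>\<^sup>+y. ennreal (G y) \<partial>P t T x)"
proof -
  have "0 \<le> B k" for k using bounded(1)[of k 0] by simp
  then have "AE x in distr R borel (\<lambda>\<omega>. \<omega> t). (\<lambda>k. B k * measure (P t T x) (E k)) \<longlonglongrightarrow> 0"
    by (rule AE_tendsto_zero_transition_mass[OF t E _ summable])
  then show ?thesis
  proof (rule AE_mp, intro AE_I2 impI)
    fix x assume small: "(\<lambda>k. B k * measure (P t T x) (E k)) \<longlonglongrightarrow> 0"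
    interpret prob_space "P t T x" using prob_space_transition(1)[OF t order.refl] .
    have sets_P: "sets (P t T x) = sets borel" using prob_space_transition(2)[OF t order.refl] .
    show "(\<lambda>k. ennreal (\<integral>y. g k y \<partial>P t T x)) \<longlonglongrightarrow> (\<integral>\<^sup>+y. ennreal (G y) \<partial>P t T x)"
      by (rule tendsto_expectation_of_approximation[OF _ _ bounded mono lim _ close \<delta> small])
        (use meas E in \<open>simp_all add: measurable_cong_sets[OF sets_P refl] sets_P\<close>)
  qed
qed

end

section \<open>Smooth approximation of the Schroedinger potential\<close>

locale schroedinger_approximation = markov_path_measure T R P
  for T :: real and R :: "(real \<Rightarrow> real^'n) measure" and P +
  fixes \<rho>0 :: "(real^'n) measure" and ff gg :: "real^'n \<Rightarrow> real"
    and g' g'' g :: "nat \<Rightarrow> real^'n \<Rightarrow> real" and D :: "nat \<Rightarrow> (real^'n) set"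
  assumes T_nonneg: "0 \<le> T"
    and sigma_finite_initial: "sigma_finite_measure (distr R borel (\<lambda>\<omega>. \<omega> 0))"
    and prob_space_rho0: "prob_space \<rho>0" and sets_rho0: "sets \<rho>0 = sets borel"
    and rho0_ac: "absolutely_continuous (distr R borel (\<lambda>\<omega>. \<omega> 0)) \<rho>0"
    and gg_meas: "gg \<in> borel_measurable borel"
    and schroedinger_initial: "AE x in distr R borel (\<lambda>\<omega>. \<omega> 0).
          ennreal (ff x) * (\<integral>\<^sup>+y. ennreal (gg y) \<partial>P 0 T x) = RN_deriv (distr R borel (\<lambda>\<omega>. \<omega> 0)) \<rho>0 x"
    and g'_meas: "\<And>k. 1 \<le> k \<Longrightarrow> g' k \<in> borel_measurable borel"
    and g'_range: "\<And>k y. 1 \<le> k \<Longrightarrow> g' k y \<in> {0..real k}"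
    and g'_mono: "\<And>k y. 1 \<le> k \<Longrightarrow> g' k y \<le> g' (Suc k) y"
    and g'_lim: "\<And>y. (\<lambda>k. g' k y) \<longlonglongrightarrow> gg y"
    and g''_meas: "\<And>k. 1 \<le> k \<Longrightarrow> g'' k \<in> borel_measurable borel"
    and g''_close: "\<And>k. 1 \<le> k \<Longrightarrow>
          emeasure (distr R borel (\<lambda>\<omega>. \<omega> T)) {y. g' k y \<noteq> g'' k y} \<le> ennreal (1 / real k ^ 3)"
    and D_meas: "\<And>k. 1 \<le> k \<Longrightarrow> D k \<in> sets borel"
    and D_large: "\<And>k. 1 \<le> k \<Longrightarrow> emeasure (distr R borel (\<lambda>\<omega>. \<omega> T)) (- D k) \<le> ennreal (1 / real k ^ 3)"
    and g_meas: "\<And>k. 1 \<le> k \<Longrightarrow> g k \<in> borel_measurable borel"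
    and g_range: "\<And>k y. 1 \<le> k \<Longrightarrow> 0 \<le> g k y \<and> g k y \<le> real k"
    and g_close: "\<And>k y. 1 \<le> k \<Longrightarrow> y \<in> D k \<Longrightarrow> \<bar>g k y - g'' k y\<bar> \<le> 1 / real k ^ 2"
begin

definition R0 :: "(real^'n) measure" where "R0 = distr R borel (\<lambda>\<omega>. \<omega> 0)"
definition RT :: "(real^'n) measure" where "RT = distr R borel (\<lambda>\<omega>. \<omega> T)"
definition S0 :: "(real^'n) set" where "S0 = {x. RN_deriv R0 \<rho>0 x = 0}"
definition PP :: "(real \<Rightarrow> real^'n) measure"
  where "PP = density R (\<lambda>\<omega>. indicator (- S0) (\<omega> 0) * RN_deriv R0 \<rho>0 (\<omega> 0))"
definition hh :: "real \<Rightarrow> real^'n \<Rightarrow> ennreal" where "hh t x = (\<integral>\<^sup>+y. ennreal (gg y) \<partial>P t T x)"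
definition h :: "nat \<Rightarrow> real \<Rightarrow> real^'n \<Rightarrow> real" where "h k t x = (\<integral>y. g k y \<partial>P t T x)"
definition A :: "nat \<Rightarrow> (real^'n) set" where "A k = {x. h k 0 x > 0}"
definition r :: "nat \<Rightarrow> real" where "r k = measure \<rho>0 (A k)"

definition ratio :: "real \<Rightarrow> (real \<Rightarrow> real^'n) \<Rightarrow> real"
  where "ratio t \<omega> = enn2real (hh t (\<omega> t)) / enn2real (hh 0 (\<omega> 0))"

definition ratio_approx :: "nat \<Rightarrow> real \<Rightarrow> (real \<Rightarrow> real^'n) \<Rightarrow> real"
  where "ratio_approx k t \<omega> = indicator (A k) (\<omega> 0) / r k * (h k t (\<omega> t) / h k 0 (\<omega> 0))"

definition exceptional :: "nat \<Rightarrow> (real^'n) set"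
  where "exceptional k = {y. g' k y \<noteq> g'' k y} \<union> - D k"

lemma exceptional_sets: "1 \<le> k \<Longrightarrow> exceptional k \<in> sets borel"
  unfolding exceptional_def using g'_meas g''_meas D_meas by measurable

lemma close_off_exceptional:
  "1 \<le> k \<Longrightarrow> y \<notin> exceptional k \<Longrightarrow> \<bar>g k y - g' k y\<bar> \<le> 1 / real k ^ 2"
  using g_close unfolding exceptional_def by force

lemma emeasure_exceptional:
  assumes "1 \<le> k"
  shows "emeasure RT (exceptional k) \<le> ennreal (2 / real k ^ 3)"
proof -
  note [measurable] = g'_meas[OF assms] g''_meas[OF assms] D_meas[OF assms]
  have "emeasure RT (exceptional k) \<le> emeasure RT {y. g' k y \<noteq> g'' k y} + emeasure RT (- D k)"
    unfolding exceptional_def RT_def by (intro emeasure_subadditive) simp_all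
  also have "\<dots> \<le> ennreal (1 / real k ^ 3) + ennreal (1 / real k ^ 3)"
    unfolding RT_def using assms by (intro add_mono g''_close D_large)
  also have "\<dots> = ennreal (2 / real k ^ 3)" by (simp flip: ennreal_plus)
  finally show ?thesis .
qed

lemma summable_exceptional_mass:
  "(\<Sum>k. ennreal (real (Suc k)) * emeasure RT (exceptional (Suc k))) < \<infinity>"
proof -
  have "summable (\<lambda>k. inverse (real k ^ 2))" by (rule inverse_power_summable) simp
  then have "summable (\<lambda>k. inverse (real (Suc k) ^ 2))" by (subst summable_Suc_iff)
  then have "summable (\<lambda>k. 2 * inverse (real (Suc k) ^ 2))" by (rule summable_mult)
  then have summable: "summable (\<lambda>k. 2 / real (Suc k) ^ 2)"
    by (simp add: divide_inverse del: of_nat_Suc)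
  have "ennreal (real (Suc k)) * emeasure RT (exceptional (Suc k)) \<le> ennreal (2 / real (Suc k) ^ 2)" for k
  proof -
    have "ennreal (real (Suc k)) * emeasure RT (exceptional (Suc k))
          \<le> ennreal (real (Suc k)) * ennreal (2 / real (Suc k) ^ 3)"
      using emeasure_exceptional[of "Suc k"] by (intro mult_left_mono) auto
    also have "\<dots> = ennreal (2 / real (Suc k) ^ 2)"
      by (simp add: ennreal_mult[symmetric] power3_eq_cube power2_eq_square del: of_nat_Suc)
    finally show ?thesis .
  qed
  then have "(\<Sum>k. ennreal (real (Suc k)) * emeasure RT (exceptional (Suc k))) \<le> (\<Sum>k. ennreal (2 / real (Suc k) ^ 2))"
    by (intro suminf_le) auto
  also have "\<dots> < \<infinity>"
  proof -
    have "(\<Sum>k. ennreal (2 / real (Suc k) ^ 2)) \<noteq> top"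
      by (rule ennreal_suminf_neq_top[OF summable]) simp
    then show ?thesis by (simp add: less_top)
  qed
  finally show ?thesis .
qed

lemma AE_tendsto_h:
  assumes t: "t \<in> {0..T}"
  shows "AE x in distr R borel (\<lambda>\<omega>. \<omega> t). (\<lambda>k. ennreal (h k t x)) \<longlonglongrightarrow> hh t x"
proof -
  have "AE x in distr R borel (\<lambda>\<omega>. \<omega> t). (\<lambda>k. ennreal (h (Suc k) t x)) \<longlonglongrightarrow> hh t x"
    unfolding h_def hh_def
  proof (rule AE_tendsto_transition_integral[where g'="\<lambda>k. g' (Suc k)" and g="\<lambda>k. g (Suc k)" and G=gg
        and B="\<lambda>k. real (Suc k)"
        and E="\<lambda>k. exceptional (Suc k)" and \<delta>="\<lambda>k. 1 / real (Suc k) ^ 2"])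
    show "(\<lambda>k. 1 / real (Suc k) ^ 2) \<longlonglongrightarrow> 0"
      using tendsto_mult[OF LIMSEQ_inverse_real_of_nat LIMSEQ_inverse_real_of_nat]
      by (simp add: power2_eq_square divide_inverse del: of_nat_Suc)
    show "(\<Sum>k. ennreal (real (Suc k)) * emeasure (distr R borel (\<lambda>\<omega>. \<omega> T)) (exceptional (Suc k))) < \<infinity>"
      using summable_exceptional_mass unfolding RT_def .
    show "(\<lambda>k. g' (Suc k) y) \<longlonglongrightarrow> gg y" for y using LIMSEQ_Suc[OF g'_lim] .
    show "\<bar>g (Suc k) y - g' (Suc k) y\<bar> \<le> 1 / real (Suc k) ^ 2" if "y \<notin> exceptional (Suc k)" for k y
      using close_off_exceptional[of "Suc k"] that by simp
    show "0 \<le> t" "t \<le> T" using t by auto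
    show "g' (Suc k) \<in> borel_measurable borel" "g (Suc k) \<in> borel_measurable borel" for k
      by (rule g'_meas g_meas; simp)+
    show "g' (Suc k) y \<in> {0..real (Suc k)}" "g (Suc k) y \<in> {0..real (Suc k)}" for k y
      using g'_range[of "Suc k" y] g_range[of "Suc k" y] by auto
    show "g' (Suc k) y \<le> g' (Suc (Suc k)) y" for k y by (rule g'_mono) simp
    show "exceptional (Suc k) \<in> sets borel" for k by (rule exceptional_sets) simp
    show "0 \<le> 1 / real (Suc k) ^ 2" for k by simp
  qed
  then show ?thesis by eventually_elim (rule LIMSEQ_imp_Suc)
qed

lemma zero_le_horizon: "0 \<in> {0..T}"
  using T_nonneg by simp

lemma sets_R0 [simp]: "sets R0 = sets borel"
  unfolding R0_def by simp

lemma measurable_RN_deriv_R0 [measurable]: "RN_deriv R0 \<rho>0 \<in> borel_measurable borel"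
  using borel_measurable_RN_deriv[of R0 \<rho>0] by (simp add: measurable_cong_sets[OF sets_R0 refl])

lemma density_RN_deriv_R0: "density R0 (RN_deriv R0 \<rho>0) = \<rho>0"
proof -
  interpret sigma_finite_measure R0 using sigma_finite_initial unfolding R0_def .
  show ?thesis using rho0_ac by (intro density_RN_deriv) (simp_all add: R0_def sets_rho0)
qed

lemma AE_RN_deriv_R0_finite: "AE x in R0. RN_deriv R0 \<rho>0 x \<noteq> \<infinity>"
proof -
  interpret sigma_finite_measure R0 using sigma_finite_initial unfolding R0_def .
  interpret rho0: prob_space \<rho>0 by (rule prob_space_rho0)
  show ?thesis
    using rho0_ac by (intro RN_deriv_finite) (simp_all add: R0_def sets_rho0 rho0.sigma_finite_measure_axioms)
qed

text \<open>The indicator of \<open>- S0\<close> in the definition of \<open>PP\<close> is redundant, because the density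
  vanishes on \<open>S0\<close>; so the initial law of \<open>PP\<close> is \<open>\<rho>0\<close>.\<close>

lemma PP_density: "PP = density R (\<lambda>\<omega>. RN_deriv R0 \<rho>0 (\<omega> 0))"
  unfolding PP_def S0_def by (rule arg_cong[where f="density R"]) (auto simp: indicator_def)

lemma sets_PP [simp]: "sets PP = sets R"
  unfolding PP_density by simp

lemma measurable_coordinate_PP: "t \<in> {0..T} \<Longrightarrow> (\<lambda>\<omega>. \<omega> t) \<in> PP \<rightarrow>\<^sub>M borel"
  using measurable_coordinate by (simp add: measurable_cong_sets[OF sets_PP refl])

lemma distr_PP_initial: "distr PP borel (\<lambda>\<omega>. \<omega> 0) = \<rho>0"
  using density_distr[OF measurable_RN_deriv_R0 measurable_coordinate[OF zero_le_horizon]]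
  by (simp add: PP_density density_RN_deriv_R0 flip: R0_def)

lemma AE_PP_of_AE_R: "AE \<omega> in R. Q \<omega> \<Longrightarrow> AE \<omega> in PP. Q \<omega>"
  using measurable_coordinate[OF zero_le_horizon]
  unfolding PP_density by (subst AE_density) auto

lemma nn_integral_PP_transition:
  assumes t: "t \<in> {0..T}" and f: "f \<in> borel_measurable borel" and \<phi>: "\<phi> \<in> borel_measurable borel"
  shows "(\<integral>\<^sup>+\<omega>. \<phi> (\<omega> 0) * (\<integral>\<^sup>+y. f y \<partial>P t T (\<omega> t)) \<partial>PP) = (\<integral>\<^sup>+x. \<phi> x * (\<integral>\<^sup>+y. f y \<partial>P 0 T x) \<partial>\<rho>0)"
proof -
  note [measurable] = measurable_coordinate[OF zero_le_horizon] measurable_coordinate[OF t] f \<phi>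
    measurable_transition_nn_integral[of t T, OF _ _ order.refl f]
    measurable_transition_nn_integral[of 0 T, OF _ _ order.refl f]
  have [simp]: "0 \<le> t" "t \<le> T" "0 \<le> T" using t by auto
  have "(\<integral>\<^sup>+\<omega>. \<phi> (\<omega> 0) * (\<integral>\<^sup>+y. f y \<partial>P t T (\<omega> t)) \<partial>PP) =
        (\<integral>\<^sup>+\<omega>. (RN_deriv R0 \<rho>0 (\<omega> 0) * \<phi> (\<omega> 0)) * (\<integral>\<^sup>+y. f y \<partial>P t T (\<omega> t)) \<partial>R)"
    unfolding PP_density by (simp add: nn_integral_density mult.assoc)
  also have "\<dots> = (\<integral>\<^sup>+\<omega>. (RN_deriv R0 \<rho>0 (\<omega> 0) * \<phi> (\<omega> 0)) * (\<integral>\<^sup>+y. f y \<partial>P 0 T (\<omega> 0)) \<partial>R)"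
    using t by (intro markov_property_initial f) auto
  also have "\<dots> = (\<integral>\<^sup>+\<omega>. \<phi> (\<omega> 0) * (\<integral>\<^sup>+y. f y \<partial>P 0 T (\<omega> 0)) \<partial>PP)"
    unfolding PP_density by (simp add: nn_integral_density mult.assoc)
  also have "\<dots> = (\<integral>\<^sup>+x. \<phi> x * (\<integral>\<^sup>+y. f y \<partial>P 0 T x) \<partial>distr PP borel (\<lambda>\<omega>. \<omega> 0))"
    using measurable_coordinate_PP[OF zero_le_horizon] by (subst nn_integral_distr) simp_all
  also have "\<dots> = (\<integral>\<^sup>+x. \<phi> x * (\<integral>\<^sup>+y. f y \<partial>P 0 T x) \<partial>\<rho>0)"
    by (simp only: distr_PP_initial)
  finally show ?thesis .
qed

lemma measurable_hh: "t \<in> {0..T} \<Longrightarrow> hh t \<in> borel_measurable borel"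
  unfolding hh_def[abs_def] using gg_meas by (intro measurable_transition_nn_integral) auto

lemma AE_rho0_initial_potential: "AE x in \<rho>0. 0 < hh 0 x \<and> hh 0 x < \<infinity>"
proof -
  have "AE x in R0. RN_deriv R0 \<rho>0 x \<noteq> 0 \<longrightarrow> 0 < hh 0 x \<and> hh 0 x < \<infinity>"
    using schroedinger_initial AE_RN_deriv_R0_finite unfolding R0_def[symmetric] hh_def[symmetric]
  proof eventually_elim
    case (elim x)
    show ?case
    proof
      assume nonzero: "RN_deriv R0 \<rho>0 x \<noteq> 0"
      then have "hh 0 x \<noteq> 0" using elim(1) by auto
      moreover have "hh 0 x \<noteq> \<infinity>"
      proof
        assume "hh 0 x = \<infinity>"
        with elim nonzero show False by (cases "ennreal (ff x) = 0") (auto simp: ennreal_mult_top)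
      qed
      ultimately show "0 < hh 0 x \<and> hh 0 x < \<infinity>" by (simp add: zero_less_iff_neq_zero less_top)
    qed
  qed
  then have "AE x in density R0 (RN_deriv R0 \<rho>0). 0 < hh 0 x \<and> hh 0 x < \<infinity>"
    by (subst AE_density) auto
  then show ?thesis by (simp only: density_RN_deriv_R0)
qed

lemma AE_PP_initial_potential: "AE \<omega> in PP. 0 < hh 0 (\<omega> 0) \<and> hh 0 (\<omega> 0) < \<infinity>"
proof -
  have "AE x in distr PP borel (\<lambda>\<omega>. \<omega> 0). 0 < hh 0 x \<and> hh 0 x < \<infinity>"
    using AE_rho0_initial_potential by (simp only: distr_PP_initial)
  then show ?thesis by (rule AE_distrD[OF measurable_coordinate_PP[OF zero_le_horizon]])
qed

lemma nn_integral_normalised_potential: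
  assumes t: "t \<in> {0..T}"
  shows "(\<integral>\<^sup>+\<omega>. ennreal (1 / enn2real (hh 0 (\<omega> 0))) * hh t (\<omega> t) \<partial>PP) = 1"
proof -
  have "(\<integral>\<^sup>+\<omega>. ennreal (1 / enn2real (hh 0 (\<omega> 0))) * hh t (\<omega> t) \<partial>PP) =
        (\<integral>\<^sup>+x. ennreal (1 / enn2real (hh 0 x)) * hh 0 x \<partial>\<rho>0)"
  proof -
    note [measurable] = measurable_hh[OF zero_le_horizon]
    show ?thesis
      using nn_integral_PP_transition[OF t, of "\<lambda>y. ennreal (gg y)" "\<lambda>x. ennreal (1 / enn2real (hh 0 x))"]
        gg_meas unfolding hh_def[symmetric] by simp
  qed
  also have "\<dots> = (\<integral>\<^sup>+x. 1 \<partial>\<rho>0)"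
  proof (rule nn_integral_cong_AE)
    show "AE x in \<rho>0. ennreal (1 / enn2real (hh 0 x)) * hh 0 x = 1"
      using AE_rho0_initial_potential by eventually_elim (auto intro: ennreal_inverse_mult_cancel)
  qed
  also have "\<dots> = 1"
    using prob_space.emeasure_space_1[OF prob_space_rho0] by simp
  finally show ?thesis .
qed

lemma AE_PP_potential_finite:
  assumes t: "t \<in> {0..T}"
  shows "AE \<omega> in PP. hh t (\<omega> t) < \<infinity>"
proof -
  note [measurable] = measurable_coordinate_PP[OF zero_le_horizon] measurable_coordinate_PP[OF t]
    measurable_hh[OF zero_le_horizon] measurable_hh[OF t]
  have "AE \<omega> in PP. ennreal (1 / enn2real (hh 0 (\<omega> 0))) * hh t (\<omega> t) \<noteq> \<infinity>"
    by (rule nn_integral_PInf_AE) (simp_all add: nn_integral_normalised_potential[OF t])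
  then show ?thesis
    using AE_PP_initial_potential
  proof eventually_elim
    case (elim \<omega>)
    then have "ennreal (1 / enn2real (hh 0 (\<omega> 0))) \<noteq> 0"
      by (auto simp: enn2real_eq_0_iff)
    with elim(1) show ?case
      by (metis ennreal_mult_top infinity_ennreal_def less_top)
  qed
qed

lemma nn_integral_ratio:
  assumes t: "t \<in> {0..T}"
  shows "(\<integral>\<^sup>+\<omega>. ennreal (ratio t \<omega>) \<partial>PP) = 1"
proof -
  have "(\<integral>\<^sup>+\<omega>. ennreal (ratio t \<omega>) \<partial>PP) = (\<integral>\<^sup>+\<omega>. ennreal (1 / enn2real (hh 0 (\<omega> 0))) * hh t (\<omega> t) \<partial>PP)"
  proof (rule nn_integral_cong_AE)
    show "AE \<omega> in PP. ennreal (ratio t \<omega>) = ennreal (1 / enn2real (hh 0 (\<omega> 0))) * hh t (\<omega> t)"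
      using AE_PP_potential_finite[OF t]
    proof eventually_elim
      case (elim \<omega>)
      then have "hh t (\<omega> t) = ennreal (enn2real (hh t (\<omega> t)))" by (simp add: less_top)
      then show ?case
        unfolding ratio_def by (metis divide_nonneg_nonneg enn2real_nonneg ennreal_mult times_divide_eq_left
            mult_1 zero_le_one)
    qed
  qed
  also have "\<dots> = 1" by (rule nn_integral_normalised_potential[OF t])
  finally show ?thesis .
qed

lemma measurable_h: "1 \<le> k \<Longrightarrow> t \<in> {0..T} \<Longrightarrow> h k t \<in> borel_measurable borel"
  unfolding h_def[abs_def] using g_meas by (intro measurable_transition_integral) auto

lemma h_nonneg: "1 \<le> k \<Longrightarrow> 0 \<le> h k t x"
  unfolding h_def using g_range by (intro integral_nonneg_AE AE_I2) blast

lemma ennreal_h: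
  assumes k: "1 \<le> k" and t: "t \<in> {0..T}"
  shows "ennreal (h k t x) = (\<integral>\<^sup>+y. ennreal (g k y) \<partial>P t T x)"
proof -
  have t': "0 \<le> t" "t \<le> T" using t by auto
  interpret prob_space "P t T x" using prob_space_transition(1)[OF t' order.refl] .
  have "g k \<in> borel_measurable (P t T x)"
    using g_meas[OF k] measurable_cong_sets[OF prob_space_transition(2)[OF t' order.refl] refl] by blast
  then show ?thesis
    unfolding h_def using g_range[OF k]
    by (intro nn_integral_eq_integral[symmetric] integrable_const_bound[where B="real k"]) simp_all
qed

lemma sets_A: "1 \<le> k \<Longrightarrow> A k \<in> sets borel"
  unfolding A_def using measurable_h[of k 0] zero_le_horizon by measurable

lemma nn_integral_ratio_approx_le:
  assumes k: "1 \<le> k" and t: "t \<in> {0..T}"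
  shows "(\<integral>\<^sup>+\<omega>. ennreal (ratio_approx k t \<omega>) \<partial>PP) \<le> 1"
proof -
  define \<phi> where "\<phi> x = ennreal (indicator (A k) x / (r k * h k 0 x))" for x
  note [measurable] = measurable_h[OF k zero_le_horizon] sets_A[OF k]
  have \<phi>_meas [measurable]: "\<phi> \<in> borel_measurable borel" unfolding \<phi>_def by measurable
  have r_nonneg: "0 \<le> r k" unfolding r_def by simp
  have "(\<integral>\<^sup>+\<omega>. ennreal (ratio_approx k t \<omega>) \<partial>PP) =
        (\<integral>\<^sup>+\<omega>. \<phi> (\<omega> 0) * (\<integral>\<^sup>+y. ennreal (g k y) \<partial>P t T (\<omega> t)) \<partial>PP)"
  proof (rule nn_integral_cong)
    fix \<omega> :: "real \<Rightarrow> real^'n"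
    have "ratio_approx k t \<omega> = indicator (A k) (\<omega> 0) / (r k * h k 0 (\<omega> 0)) * h k t (\<omega> t)"
      unfolding ratio_approx_def by (simp add: times_divide_times_eq mult.commute)
    also have "ennreal \<dots> = \<phi> (\<omega> 0) * ennreal (h k t (\<omega> t))"
      unfolding \<phi>_def using h_nonneg[OF k] r_nonneg by (intro ennreal_mult) auto
    finally show "ennreal (ratio_approx k t \<omega>) = \<phi> (\<omega> 0) * (\<integral>\<^sup>+y. ennreal (g k y) \<partial>P t T (\<omega> t))"
      by (simp only: ennreal_h[OF k t])
  qed
  also have "\<dots> = (\<integral>\<^sup>+x. \<phi> x * (\<integral>\<^sup>+y. ennreal (g k y) \<partial>P 0 T x) \<partial>\<rho>0)"
    using g_meas[OF k] by (intro nn_integral_PP_transition[OF t _ \<phi>_meas]) measurable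
  also have "\<dots> = (\<integral>\<^sup>+x. ennreal (1 / r k) * indicator (A k) x \<partial>\<rho>0)"
  proof (rule nn_integral_cong)
    fix x :: "real^'n"
    have "\<phi> x * ennreal (h k 0 x) = ennreal (indicator (A k) x / (r k * h k 0 x) * h k 0 x)"
      unfolding \<phi>_def using h_nonneg[OF k] r_nonneg by (intro ennreal_mult[symmetric]) auto
    also have "indicator (A k) x / (r k * h k 0 x) * h k 0 x = 1 / r k * indicator (A k) x"
      by (cases "x \<in> A k") (auto simp: A_def)
    also have "ennreal \<dots> = ennreal (1 / r k) * indicator (A k) x"
      by (cases "x \<in> A k") simp_all
    finally show "\<phi> x * (\<integral>\<^sup>+y. ennreal (g k y) \<partial>P 0 T x) = ennreal (1 / r k) * indicator (A k) x"
      by (simp only: ennreal_h[OF k zero_le_horizon])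
  qed
  also have "\<dots> = ennreal (1 / r k) * emeasure \<rho>0 (A k)"
    by (rule nn_integral_cmult_indicator) (simp add: sets_rho0 sets_A[OF k])
  also have "\<dots> = ennreal (1 / r k * r k)"
    using r_nonneg finite_measure.emeasure_eq_measure[OF prob_space.finite_measure[OF prob_space_rho0]]
    unfolding r_def by (subst ennreal_mult) simp_all
  also have "\<dots> \<le> 1" by (cases "r k = 0") auto
  finally show ?thesis .
qed

lemma AE_rho0_tendsto_h_initial: "AE x in \<rho>0. (\<lambda>k. ennreal (h k 0 x)) \<longlonglongrightarrow> hh 0 x"
proof (rule absolutely_continuous_AE[OF _ rho0_ac])
  show "sets \<rho>0 = sets (distr R borel (\<lambda>\<omega>. \<omega> 0))" by (simp add: sets_rho0)
qed (rule AE_tendsto_h[OF zero_le_horizon])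

lemma r_tendsto_1: "r \<longlonglongrightarrow> 1"
proof -
  interpret rho0: prob_space \<rho>0 by (rule prob_space_rho0)
  have space_rho0: "space \<rho>0 = UNIV" using sets_eq_imp_space_eq[OF sets_rho0] by simp
  have lim: "AE x in \<rho>0. (\<lambda>k. indicator (A (Suc k)) x :: real) \<longlonglongrightarrow> 1"
    using AE_rho0_tendsto_h_initial AE_rho0_initial_potential
  proof eventually_elim
    case (elim x)
    then have "eventually (\<lambda>k. 0 < ennreal (h k 0 x)) sequentially"
      by (intro order_tendstoD(1)[OF elim(1)]) simp
    then have "eventually (\<lambda>k. x \<in> A k) sequentially"
      by eventually_elim (simp add: A_def)
    then have "eventually (\<lambda>k. x \<in> A (Suc k)) sequentially"
      by (rule eventually_sequentially_Suc[THEN iffD2])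
    then have "eventually (\<lambda>k. indicator (A (Suc k)) x = (1::real)) sequentially"
      by eventually_elim simp
    then show ?case by (rule tendsto_eventually)
  qed
  have "(\<lambda>k. \<integral>x. indicator (A (Suc k)) x \<partial>\<rho>0) \<longlonglongrightarrow> (\<integral>x. (1::real) \<partial>\<rho>0)"
  proof (rule integral_dominated_convergence[where w="\<lambda>_. 1"])
    show "(\<lambda>x. indicator (A (Suc k)) x :: real) \<in> borel_measurable \<rho>0" for k
      using sets_A[of "Suc k"] by (intro borel_measurable_indicator) (simp add: sets_rho0)
    show "AE x in \<rho>0. norm (indicator (A (Suc k)) x :: real) \<le> 1" for k
      by (simp add: indicator_def)
    show "(\<lambda>x. 1 :: real) \<in> borel_measurable \<rho>0" "integrable \<rho>0 (\<lambda>x. 1 :: real)" by simp_all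
    show "AE x in \<rho>0. (\<lambda>k. indicator (A (Suc k)) x :: real) \<longlonglongrightarrow> 1" by (rule lim)
  qed
  moreover have "(\<integral>x. indicator (A k) x \<partial>\<rho>0) = r k" for k
    unfolding r_def by (simp add: space_rho0)
  ultimately have "(\<lambda>k. r (Suc k)) \<longlonglongrightarrow> 1"
    by (simp add: rho0.prob_space)
  then show ?thesis by (rule LIMSEQ_imp_Suc)
qed

lemma AE_PP_tendsto_h:
  assumes t: "t \<in> {0..T}"
  shows "AE \<omega> in PP. (\<lambda>k. ennreal (h k t (\<omega> t))) \<longlonglongrightarrow> hh t (\<omega> t)"
  using AE_distrD[OF measurable_coordinate[OF t] AE_tendsto_h[OF t]] by (rule AE_PP_of_AE_R)

lemma AE_tendsto_ratio:
  assumes t: "t \<in> {0..T}"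
  shows "AE \<omega> in PP. (\<lambda>k. ratio_approx k t \<omega>) \<longlonglongrightarrow> ratio t \<omega>"
  using AE_PP_tendsto_h[OF t] AE_PP_tendsto_h[OF zero_le_horizon] AE_PP_initial_potential
    AE_PP_potential_finite[OF t]
proof eventually_elim
  case (elim \<omega>)
  have nonneg: "\<forall>\<^sub>F k in sequentially. 0 \<le> h k s x" for s x
    using eventually_ge_at_top[of 1] by eventually_elim (rule h_nonneg)
  have lim_t: "(\<lambda>k. h k t (\<omega> t)) \<longlonglongrightarrow> enn2real (hh t (\<omega> t))"
    using elim(1,4) nonneg by (rule tendsto_enn2real_of_ennreal)
  have lim_0: "(\<lambda>k. h k 0 (\<omega> 0)) \<longlonglongrightarrow> enn2real (hh 0 (\<omega> 0))"
    using elim(2,3) nonneg by (intro tendsto_enn2real_of_ennreal) auto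
  have pos: "0 < enn2real (hh 0 (\<omega> 0))"
    using elim(3) by (simp add: enn2real_positive_iff less_top)
  have "(\<lambda>k. 1 / r k * (h k t (\<omega> t) / h k 0 (\<omega> 0))) \<longlonglongrightarrow> 1 / 1 * ratio t \<omega>"
    unfolding ratio_def using pos by (intro tendsto_intros r_tendsto_1 lim_t lim_0) auto
  moreover have "\<forall>\<^sub>F k in sequentially. 1 / r k * (h k t (\<omega> t) / h k 0 (\<omega> 0)) = ratio_approx k t \<omega>"
    using order_tendstoD(1)[OF lim_0 pos] by eventually_elim (simp add: ratio_approx_def A_def)
  ultimately show ?case by (simp add: Lim_transform_eventually)
qed

lemma measurable_ratio:
  assumes "t \<in> {0..T}"
  shows "ratio t \<in> borel_measurable PP"
proof -
  note [measurable] = measurable_coordinate_PP[OF zero_le_horizon] measurable_coordinate_PP[OF assms]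
    measurable_hh[OF zero_le_horizon] measurable_hh[OF assms]
  show ?thesis unfolding ratio_def[abs_def] by measurable
qed

lemma measurable_ratio_approx:
  assumes "1 \<le> k" "t \<in> {0..T}"
  shows "ratio_approx k t \<in> borel_measurable PP"
proof -
  note [measurable] = measurable_coordinate_PP[OF zero_le_horizon] measurable_coordinate_PP[OF assms(2)]
    measurable_h[OF assms(1) zero_le_horizon] measurable_h[OF assms] sets_A[OF assms(1)]
  show ?thesis unfolding ratio_approx_def[abs_def] by measurable
qed

lemma ratio_approx_nonneg: "1 \<le> k \<Longrightarrow> 0 \<le> ratio_approx k t \<omega>"
  unfolding ratio_approx_def r_def using h_nonneg by simp

lemma integrable_ratio: "t \<in> {0..T} \<Longrightarrow> integrable PP (ratio t)"
  by (rule integrableI_nonneg) (simp_all add: measurable_ratio ratio_def nn_integral_ratio[unfolded ratio_def])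

lemma integrable_ratio_approx: "1 \<le> k \<Longrightarrow> t \<in> {0..T} \<Longrightarrow> integrable PP (ratio_approx k t)"
  using nn_integral_ratio_approx_le[of k t]
  by (intro integrableI_nonneg) (auto simp: measurable_ratio_approx ratio_approx_nonneg le_less_trans)

lemma tendsto_L1_ratio_approx:
  assumes t: "t \<in> {0..T}"
  shows "(\<lambda>k. \<integral>\<omega>. \<bar>ratio_approx k t \<omega> - ratio t \<omega>\<bar> \<partial>PP) \<longlonglongrightarrow> 0"
proof -
  have "(\<lambda>k. \<integral>\<omega>. norm (ratio_approx (Suc k) t \<omega> - ratio t \<omega>) \<partial>PP) \<longlonglongrightarrow> 0"
  proof (rule Scheffe_integral_norm_diff_tendsto_zero)
    show "ratio_approx (Suc k) t \<in> borel_measurable PP" for k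
      by (rule measurable_ratio_approx[OF _ t]) simp
    show "integrable PP (ratio t)" by (rule integrable_ratio[OF t])
    show "AE \<omega> in PP. (\<lambda>k. ratio_approx (Suc k) t \<omega>) \<longlonglongrightarrow> ratio t \<omega>"
      using AE_tendsto_ratio[OF t] by eventually_elim (rule LIMSEQ_Suc)
    show "(\<integral>\<^sup>+\<omega>. norm (ratio_approx (Suc k) t \<omega>) \<partial>PP) \<le> (\<integral>\<^sup>+\<omega>. norm (ratio t \<omega>) \<partial>PP)" for k
    proof -
      have "(\<integral>\<^sup>+\<omega>. norm (ratio_approx (Suc k) t \<omega>) \<partial>PP) = (\<integral>\<^sup>+\<omega>. ratio_approx (Suc k) t \<omega> \<partial>PP)"
        using ratio_approx_nonneg[of "Suc k"] by simp
      also have "\<dots> \<le> 1" by (rule nn_integral_ratio_approx_le[OF _ t]) simp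
      also have "1 = (\<integral>\<^sup>+\<omega>. norm (ratio t \<omega>) \<partial>PP)"
        using nn_integral_ratio[OF t] by (simp add: ratio_def)
      finally show ?thesis .
    qed
  qed
  then show ?thesis by (simp add: LIMSEQ_imp_Suc)
qed

theorem approximation_convergence:
  assumes "t \<in> {0..T}"
  shows "(AE \<omega> in PP. (\<lambda>k. ennreal (h k t (\<omega> t))) \<longlonglongrightarrow> hh t (\<omega> t)) \<and>
    integrable PP (ratio t) \<and> (\<forall>k\<ge>1. integrable PP (ratio_approx k t)) \<and>
    (\<lambda>k. \<integral>\<omega>. \<bar>ratio_approx k t \<omega> - ratio t \<omega>\<bar> \<partial>PP) \<longlonglongrightarrow> 0"
  using AE_PP_tendsto_h integrable_ratio integrable_ratio_approx tendsto_L1_ratio_approx assms by blast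

end

theorem mainTheorem11:
  fixes T :: real
    and R :: "(real \<Rightarrow> real^'n) measure"
    and P :: "real \<Rightarrow> real \<Rightarrow> real^'n \<Rightarrow> (real^'n) measure"
    and b :: "real \<Rightarrow> real^'n \<Rightarrow> real^'n"
    and a :: "real \<Rightarrow> real^'n \<Rightarrow> real^'n^'n"
    and J :: "real \<Rightarrow> real^'n \<Rightarrow> (real^'n) measure"
    and \<rho>0 \<rho>T :: "(real^'n) measure"
    and ff gg :: "real^'n \<Rightarrow> real"
    and g' g'' g :: "nat \<Rightarrow> real^'n \<Rightarrow> real"
    and D :: "nat \<Rightarrow> (real^'n) set"
    and R0 RT :: "(real^'n) measure"
    and S0 :: "(real^'n) set"
    and PP :: "(real \<Rightarrow> real^'n) measure"
    and hh :: "real \<Rightarrow> real^'n \<Rightarrow> ennreal"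
    and h :: "nat \<Rightarrow> real \<Rightarrow> real^'n \<Rightarrow> real"
    and A :: "nat \<Rightarrow> (real^'n) set"
    and r :: "nat \<Rightarrow> real"
  defines "R0 \<equiv> distr R borel (\<lambda>\<omega>. \<omega> 0)"
    and "RT \<equiv> distr R borel (\<lambda>\<omega>. \<omega> T)"
    and "S0 \<equiv> {x. RN_deriv R0 \<rho>0 x = 0}"
    and "PP \<equiv> density R (\<lambda>\<omega>. indicator (- S0) (\<omega> 0) * RN_deriv R0 \<rho>0 (\<omega> 0))"
    and "hh \<equiv> (\<lambda>t x. \<integral>\<^sup>+y. ennreal (gg y) \<partial>(P t T x))"
    and "h \<equiv> (\<lambda>k t x. \<integral>y. g k y \<partial>(P t T x))"
    and "A \<equiv> (\<lambda>k. {x. h k 0 x > 0})"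
    and "r \<equiv> (\<lambda>k. measure \<rho>0 (A k))"
  assumes T_pos: "T > 0"
    and R_sets: "sets R = sets (path_space T)"
    and R_marg_sigma_finite: "\<forall>t\<in>{0..T}. sigma_finite_measure (distr R borel (\<lambda>\<omega>. \<omega> t))"
    and R_markov: "strong_markov_transitions R T P"
    and rho0_prob: "prob_space \<rho>0" and rho0_sets: "sets \<rho>0 = sets borel"
    and rhoT_prob: "prob_space \<rho>T" and rhoT_sets: "sets \<rho>T = sets borel"
    and rho0_ac: "absolutely_continuous R0 \<rho>0"
    and rhoT_ac: "absolutely_continuous RT \<rho>T"
    and ff_meas: "ff \<in> borel_measurable borel" and ff_nonneg: "\<forall>x. 0 \<le> ff x"
    and gg_meas: "gg \<in> borel_measurable borel" and gg_nonneg: "\<forall>y. 0 \<le> gg y"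
    and schr0: "AE x in R0. ennreal (ff x) * (\<integral>\<^sup>+y. ennreal (gg y) \<partial>(P 0 T x)) = RN_deriv R0 \<rho>0 x"
    and schrT: "AE y in RT. ennreal (gg y) * cond_exp_given_X R (\<lambda>\<omega>. ennreal (ff (\<omega> 0))) T y
                  = RN_deriv RT \<rho>T y"
    and A3: "\<forall>u. smooth_fun u \<and> compact_support u \<longrightarrow>
               C12_backward_eq T b a J (\<lambda>t x. \<integral>y. u y \<partial>(P t T x))"
    and g'_simple: "\<forall>k\<ge>1. simple_function borel (g' k)"
    and g'_range: "\<forall>k\<ge>1. \<forall>y. g' k y \<in> {0..real k}"
    and g'_mono: "\<forall>k\<ge>1. \<forall>y. g' k y \<le> g' (Suc k) y"
    and g'_lim: "\<forall>y. (\<lambda>k. g' k y) \<longlonglongrightarrow> gg y"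
    and g''_cont: "\<forall>k\<ge>1. continuous_on UNIV (g'' k)"
    and g''_bdd: "\<forall>k\<ge>1. bounded (range (g'' k))"
    and g''_nonneg: "\<forall>k\<ge>1. \<forall>y. 0 \<le> g'' k y"
    and g''_close: "\<forall>k\<ge>1. emeasure RT {y. g' k y \<noteq> g'' k y} \<le> ennreal (1 / real k ^ 3)"
    and D_compact: "\<forall>k\<ge>1. compact (D k)"
    and D_large: "\<forall>k\<ge>1. emeasure RT (- D k) \<le> ennreal (1 / real k ^ 3)"
    and g_smooth: "\<forall>k\<ge>1. smooth_fun (g k) \<and> compact_support (g k)"
    and g_range: "\<forall>k\<ge>1. \<forall>y. 0 \<le> g k y \<and> g k y \<le> real k"
    and g_close: "\<forall>k\<ge>1. \<forall>y\<in>D k. \<bar>g k y - g'' k y\<bar> \<le> 1 / real k ^ 2"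
  shows "\<forall>t\<in>{0..T}.
           (AE \<omega> in PP. (\<lambda>k. ennreal (h k t (\<omega> t))) \<longlonglongrightarrow> hh t (\<omega> t)) \<and>
           (let Y = (\<lambda>\<omega>. enn2real (hh t (\<omega> t)) / enn2real (hh 0 (\<omega> 0)));
                Yk = (\<lambda>k \<omega>. indicator (A k) (\<omega> 0) / r k * (h k t (\<omega> t) / h k 0 (\<omega> 0)))
            in integrable PP Y \<and> (\<forall>k\<ge>1. integrable PP (Yk k)) \<and>
               (\<lambda>k. \<integral>\<omega>. \<bar>Yk k \<omega> - Y \<omega>\<bar> \<partial>PP) \<longlonglongrightarrow> 0)"
proof -
  have g_meas: "g k \<in> borel_measurable borel" if "1 \<le> k" for k
    using g_smooth that by (auto intro: borel_measurable_smooth_fun)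
  have g'_meas: "g' k \<in> borel_measurable borel" if "1 \<le> k" for k
    using g'_simple that by (auto intro: borel_measurable_simple_function)
  have g''_meas: "g'' k \<in> borel_measurable borel" if "1 \<le> k" for k
    using g''_cont that by (auto intro: borel_measurable_continuous_onI)
  have D_meas: "D k \<in> sets borel" if "1 \<le> k" for k
    using D_compact that by (auto intro: borel_closed compact_imp_closed)
  interpret S: schroedinger_approximation T R P \<rho>0 ff gg g' g'' g D
  proof (intro schroedinger_approximation.intro markov_path_measure.intro
      schroedinger_approximation_axioms.intro)
    show "0 \<le> T" using T_pos by simp
    show "sigma_finite_measure (distr R borel (\<lambda>\<omega>. \<omega> 0))" using R_marg_sigma_finite T_pos by simp
    show "absolutely_continuous (distr R borel (\<lambda>\<omega>. \<omega> 0)) \<rho>0" using rho0_ac unfolding R0_def .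
    show "AE x in distr R borel (\<lambda>\<omega>. \<omega> 0).
        ennreal (ff x) * (\<integral>\<^sup>+y. ennreal (gg y) \<partial>P 0 T x) = RN_deriv (distr R borel (\<lambda>\<omega>. \<omega> 0)) \<rho>0 x"
      using schr0 unfolding R0_def .
    show "(\<lambda>k. g' k y) \<longlonglongrightarrow> gg y" for y using g'_lim by blast
    show "g' k y \<in> {0..real k}" "g' k y \<le> g' (Suc k) y" "0 \<le> g k y \<and> g k y \<le> real k"
      if "1 \<le> k" for k y using g'_range g'_mono g_range that by simp_all
    show "emeasure (distr R borel (\<lambda>\<omega>. \<omega> T)) {y. g' k y \<noteq> g'' k y} \<le> ennreal (1 / real k ^ 3)"
      "emeasure (distr R borel (\<lambda>\<omega>. \<omega> T)) (- D k) \<le> ennreal (1 / real k ^ 3)"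
      if "1 \<le> k" for k using g''_close D_large that unfolding RT_def by simp_all
    show "\<bar>g k y - g'' k y\<bar> \<le> 1 / real k ^ 2" if "1 \<le> k" "y \<in> D k" for k y
      using g_close that by simp
  qed (fact R_sets R_markov rho0_prob rho0_sets gg_meas g'_meas g''_meas D_meas g_meas)+
  have defs: "PP = S.PP" "hh = S.hh" "h = S.h" "A = S.A" "r = S.r"
    unfolding PP_def S.PP_def S0_def S.S0_def R0_def S.R0_def hh_def S.hh_def[abs_def]
      h_def S.h_def[abs_def] A_def S.A_def[abs_def] r_def S.r_def[abs_def] by simp_all
  show ?thesis
    using S.approximation_convergence
    unfolding defs Let_def S.ratio_def[abs_def] S.ratio_approx_def[abs_def] by blast
qed

end
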